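(* Let $V,\mathfrak{a}$ be finite-dimensional vector spaces over $\mathbb{Q}$, and let $\varphi^1_i,\varphi^2_j\in\mathfrak{a}^*$, $\chi^1_i,\chi^2_j\in V^*$ for $i=1,\dots,k_1$, $j=1,\dots,k_2$. For $v\in V(\mathbb{R})=V\otimes\mathbb{R}$ and $l=1,2$ set $P^l(v)=\{\lambda\in\mathfrak{a}(\mathbb{R}):\langle\varphi^l_i,\lambda\rangle\ge-\chi^l_i(v)\ \text{for all } i=1,\dots,k_l\}$. Suppose there is $v\in V(\mathbb{R})$ such that $P^1(v)=P^2(v)$ and this polytope has dimension $\dim\mathfrak{a}(\mathbb{R})$. Then for every neighborhood $O$ of $v$ in $V(\mathbb{R})$ there is $v'\in O\cap V$ with $P^1(v')=P^2(v')$.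
   Context: $\mathfrak{a}(\mathbb{R})=\mathfrak{a}\otimes_{\mathbb{Q}}\mathbb{R}$; elements of $\mathfrak{a}^*$ and $V^*$ are extended $\mathbb{R}$-linearly. $V$ is regarded as the set of rational points of $V(\mathbb{R})$. *)

theory Defs
  imports "HOL-Analysis.Analysis"
begin

text \<open>V(R) is modelled as real^'v, a(R) as real^'a; the rational structure is the
standard one: a vector (or a functional, given by its coefficient vector w.r.t.
the standard basis and the inner product) is rational iff all coordinates are in Rats.\<close>

definition rational_vec :: "real^'n \<Rightarrow> bool" where
  "rational_vec x \<longleftrightarrow> (\<forall>i. x $ i \<in> \<rat>)"

definition polyP :: "nat \<Rightarrow> (nat \<Rightarrow> real^'a) \<Rightarrow> (nat \<Rightarrow> real^'v) \<Rightarrow> real^'v \<Rightarrow> (real^'a) set" where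
  "polyP k ph ch v = {l. \<forall>i<k. ph i \<bullet> l \<ge> - (ch i \<bullet> v)}"

end

theory Submission
  imports Defs
begin

text \<open>Since \<open>P\<^sup>1(v) = P\<^sup>2(v)\<close> is nonempty, every inequality of one system is implied by the
  other system, so by the affine Farkas lemma it is a nonnegative combination of the other
  system's inequalities with a weaker right-hand side. All data being rational, the multipliers
  can be chosen rational: reduce to a linearly independent support (Caratheodory) and solve for
  the coefficients with a Gram--Schmidt step over \<open>\<rat>\<close>. The slack of each certificate is then a
  rational linear form in \<open>v\<close> that is nonnegative at \<open>v\<close>. Wherever all slacks stay nonnegative the
  certificates remain valid, so \<open>P\<^sup>1 = P\<^sup>2\<close> on a rational polyhedral cone containing \<open>v\<close>, and
  rational points of such a cone accumulate at \<open>v\<close>.\<close>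

section \<open>Rational vectors\<close>

lemma rational_vec_diff: "rational_vec x \<Longrightarrow> rational_vec y \<Longrightarrow> rational_vec (x - y)"
  by (simp add: rational_vec_def)

lemma rational_vec_scaleR: "c \<in> \<rat> \<Longrightarrow> rational_vec x \<Longrightarrow> rational_vec (c *\<^sub>R x)"
  by (simp add: rational_vec_def)

lemma rational_vec_sum: "(\<And>i. i \<in> S \<Longrightarrow> rational_vec (f i)) \<Longrightarrow> rational_vec (\<Sum>i\<in>S. f i)"
  by (induction S rule: infinite_finite_induct) (auto simp: rational_vec_def)

lemma inner_rational_vec: "rational_vec x \<Longrightarrow> rational_vec y \<Longrightarrow> x \<bullet> y \<in> \<rat>"
  unfolding rational_vec_def inner_vec_def by (auto intro!: Rats_sum)

lemma open_contains_rational_vec: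
  fixes v :: "real^'n"
  assumes "open S" "v \<in> S"
  obtains q where "q \<in> S" "rational_vec q"
proof -
  obtain e where "e > 0" "ball v e \<subseteq> S" using assms open_contains_ball by blast
  define e' where "e' = e / CARD('n)"
  have "e' > 0" using \<open>e > 0\<close> by (simp add: e'_def)
  then have "\<forall>i. \<exists>r\<in>\<rat>. v$i - e' < r \<and> r < v$i + e'"
    by (intro allI Rats_dense_in_real) simp
  then obtain r where r: "\<And>i. r i \<in> \<rat>" "\<And>i. \<bar>r i - v$i\<bar> < e'"
    by (metis abs_diff_less_iff)
  define q where "q = (\<chi> i. r i)"
  have "dist q v \<le> (\<Sum>i\<in>UNIV. \<bar>(q - v)$i\<bar>)" unfolding dist_norm by (rule norm_le_l1_cart)
  also have "\<dots> < (\<Sum>i\<in>(UNIV::'n set). e')"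
    using r(2) by (intro sum_strict_mono) (auto simp: q_def)
  also have "\<dots> = e" by (simp add: e'_def)
  finally have "q \<in> S" using \<open>ball v e \<subseteq> S\<close> by (auto simp: dist_commute)
  moreover have "rational_vec q" using r(1) by (simp add: rational_vec_def q_def)
  ultimately show ?thesis using that by blast
qed

lemma orthogonal_span_eq_0:
  fixes z :: "'a::real_inner"
  assumes "z \<in> span B" "\<And>b. b \<in> B \<Longrightarrow> z \<bullet> b = 0"
  shows "z = 0"
  using orthogonal_to_span[OF assms(1), of z] assms by (auto simp: orthogonal_def)

lemma inner_span_eq_0:
  fixes x :: "'a::real_inner"
  assumes "y \<in> span B" "\<And>b. b \<in> B \<Longrightarrow> x \<bullet> b = 0"
  shows "x \<bullet> y = 0"
  using orthogonal_to_span[OF assms(1), of x] assms by (auto simp: orthogonal_def)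

lemma span_image_eq_sum:
  fixes f :: "'i \<Rightarrow> 'a::real_vector"
  assumes "finite A" "x \<in> span (f ` A)"
  obtains c where "x = (\<Sum>j\<in>A. c j *\<^sub>R f j)"
  using assms
proof (induction A arbitrary: x thesis rule: finite_induct)
  case empty
  then show ?case by simp
next
  case (insert a A)
  obtain t where "x - t *\<^sub>R f a \<in> span (f ` A)"
    using insert.prems(2) by (auto simp: span_insert)
  then obtain c where c: "x - t *\<^sub>R f a = (\<Sum>j\<in>A. c j *\<^sub>R f j)"
    using insert.IH by blast
  have "(\<Sum>j\<in>A. (c(a := t)) j *\<^sub>R f j) = (\<Sum>j\<in>A. c j *\<^sub>R f j)"
    using insert.hyps(2) by (intro sum.cong) auto
  then have "(\<Sum>j\<in>insert a A. (c(a := t)) j *\<^sub>R f j) = t *\<^sub>R f a + (\<Sum>j\<in>A. c j *\<^sub>R f j)"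
    using insert.hyps by simp
  then show ?case using insert.prems(1) c by (metis add.commute diff_add_cancel)
qed

lemma rational_orthogonal_projection:
  fixes B :: "(real^'n) set"
  assumes "finite B" "\<And>b. b \<in> B \<Longrightarrow> rational_vec b"
  obtains p where "linear p" "\<And>x. rational_vec x \<Longrightarrow> rational_vec (p x)"
    "\<And>x b. b \<in> B \<Longrightarrow> p x \<bullet> b = 0" "\<And>x. x - p x \<in> span B"
  using assms
proof (induction B arbitrary: thesis rule: finite_induct)
  case empty
  show ?case by (rule empty.prems(1)[of id]) (auto simp: linear_iff)
next
  case (insert a B)
  obtain p where p: "linear p" "\<And>x. rational_vec x \<Longrightarrow> rational_vec (p x)"
    "\<And>x b. b \<in> B \<Longrightarrow> p x \<bullet> b = 0" "\<And>x. x - p x \<in> span B"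
    using insert.IH insert.prems(2) by blast
  define a' where "a' = p a"
  \<comment> \<open>if \<open>a' = 0\<close> the correction term is \<open>0\<close>, as \<open>x / 0 = 0\<close>\<close>
  define p' where "p' x = p x - ((p x \<bullet> a') / (a' \<bullet> a')) *\<^sub>R a'" for x
  have "a - a' \<in> span B" using p(4) by (simp add: a'_def)
  have p'B: "p' x \<bullet> b = 0" if "b \<in> B" for x b
    using p(3) that by (simp add: p'_def a'_def inner_diff_left)
  have p'a': "p' x \<bullet> a' = 0" for x
    by (cases "a' = 0") (simp_all add: p'_def inner_diff_left)
  have "p' x \<bullet> a = p' x \<bullet> a' + p' x \<bullet> (a - a')" for x by (simp add: inner_diff_right)
  then have p'a: "p' x \<bullet> a = 0" for x
    using p'a' inner_span_eq_0[OF \<open>a - a' \<in> span B\<close> p'B] by simp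
  show ?case
  proof (rule insert.prems(1)[of p'])
    show "linear p'"
      unfolding p'_def using p(1)
      by (intro linearI) (simp_all add: linear_add linear_scale inner_add_left add_divide_distrib
          scaleR_add_left scaleR_diff_right)
    show "rational_vec (p' x)" if "rational_vec x" for x
      unfolding p'_def using insert.prems(2) p(2) that
      by (intro rational_vec_diff rational_vec_scaleR Rats_divide inner_rational_vec) (auto simp: a'_def)
    show "p' x \<bullet> b = 0" if "b \<in> insert a B" for x b
      using that p'a p'B by auto
    have "a' \<in> span (insert a B)"
      using span_diff[OF span_base span_mono[THEN subsetD, OF _ \<open>a - a' \<in> span B\<close>], of a "insert a B"]
      by auto
    moreover have "x - p x \<in> span (insert a B)" for x
      using span_mono[of B "insert a B"] p(4)[of x] by auto
    moreover have "x - p' x = (x - p x) + ((p x \<bullet> a') / (a' \<bullet> a')) *\<^sub>R a'" for x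
      by (simp add: p'_def)
    ultimately show "x - p' x \<in> span (insert a B)" for x
      by (metis span_add span_scale)
  qed
qed

definition dual_cone :: "'a::real_inner set \<Rightarrow> 'a set" where
  "dual_cone D = {w. \<forall>d\<in>D. 0 \<le> d \<bullet> w}"

lemma dual_cone_Un: "dual_cone (D1 \<union> D2) = dual_cone D1 \<inter> dual_cone D2"
  by (auto simp: dual_cone_def)

text \<open>Rational points near \<open>v\<close> are projected, rationally, onto the orthogonal complement of
  the constraints active at \<open>v\<close>; the inactive constraints stay strict by continuity.\<close>

lemma open_contains_rational_vec_dual_cone:
  fixes v :: "real^'n"
  assumes "finite D" "\<forall>d\<in>D. rational_vec d" "v \<in> dual_cone D" "open U" "v \<in> U"
  obtains w where "w \<in> U \<inter> dual_cone D" "rational_vec w"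
proof -
  define D0 where "D0 = {d\<in>D. d \<bullet> v = 0}"
  obtain p where p: "linear p" "\<And>x. rational_vec x \<Longrightarrow> rational_vec (p x)"
    "\<And>x d. d \<in> D0 \<Longrightarrow> p x \<bullet> d = 0" "\<And>x. x - p x \<in> span D0"
    using rational_orthogonal_projection[of D0] assms(1,2) by (auto simp: D0_def)
  have "v - p v = 0"
  proof (rule orthogonal_span_eq_0[OF p(4)])
    show "(v - p v) \<bullet> d = 0" if "d \<in> D0" for d
      using p(3)[OF that, of v] that by (simp add: D0_def inner_diff_left inner_diff_right inner_commute)
  qed
  then have "p v = v" by simp
  have "continuous_on UNIV p"
    using p(1) by (simp add: linear_continuous_on linear_conv_bounded_linear)
  then have cont: "continuous_on UNIV (\<lambda>x. d \<bullet> p x)" for d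
    by (intro continuous_intros)
  define S where "S = p -` U \<inter> (\<Inter>d\<in>D - D0. (\<lambda>x. d \<bullet> p x) -` {0<..})"
  have "open S"
    unfolding S_def using assms(1,4) \<open>continuous_on UNIV p\<close> cont
    by (intro open_Int open_INT ballI finite_Diff open_vimage open_greaterThan) simp_all
  moreover have "v \<in> S"
    using assms(3,5) \<open>p v = v\<close> by (auto simp: S_def D0_def dual_cone_def less_le)
  ultimately obtain q where q: "q \<in> S" "rational_vec q"
    by (rule open_contains_rational_vec)
  show ?thesis
  proof (rule that[of "p q"])
    have "0 \<le> d \<bullet> p q" if "d \<in> D" for d
      using q p(3)[of d q] that by (cases "d \<in> D0") (auto simp: S_def inner_commute less_imp_le)
    then show "p q \<in> U \<inter> dual_cone D" using q by (auto simp: S_def dual_cone_def)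
    show "rational_vec (p q)" using q p(2) by simp
  qed
qed

section \<open>The affine Farkas lemma\<close>

definition farkas_multipliers ::
    "nat \<Rightarrow> (nat \<Rightarrow> 'a::real_inner) \<Rightarrow> (nat \<Rightarrow> real) \<Rightarrow> 'a \<Rightarrow> real \<Rightarrow> (nat \<Rightarrow> real) \<Rightarrow> bool" where
  "farkas_multipliers k \<phi> b \<psi> c \<mu> \<longleftrightarrow>
     (\<forall>i<k. 0 \<le> \<mu> i) \<and> (\<Sum>i<k. \<mu> i *\<^sub>R \<phi> i) = \<psi> \<and> (\<Sum>i<k. \<mu> i * b i) \<le> c"

lemma farkas_multipliers_imp_inequality:
  assumes "farkas_multipliers k \<phi> b \<psi> c \<mu>" "\<forall>i<k. - b i \<le> \<phi> i \<bullet> l"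
  shows "- c \<le> \<psi> \<bullet> l"
proof -
  have "- c \<le> (\<Sum>i<k. \<mu> i * (- b i))"
    using assms(1) by (simp add: farkas_multipliers_def sum_negf)
  also have "\<dots> \<le> (\<Sum>i<k. \<mu> i * (\<phi> i \<bullet> l))"
    using assms by (intro sum_mono mult_left_mono) (auto simp: farkas_multipliers_def)
  also have "\<dots> = \<psi> \<bullet> l"
    using assms(1) by (auto simp: farkas_multipliers_def inner_sum_left)
  finally show ?thesis .
qed

lemma farkas_multipliers_add:
  assumes "farkas_multipliers k \<phi> b \<psi> c \<mu>" "farkas_multipliers k \<phi> b \<psi>' c' \<mu>'"
  shows "farkas_multipliers k \<phi> b (\<psi> + \<psi>') (c + c') (\<lambda>i. \<mu> i + \<mu>' i)"
  using assms by (auto simp: farkas_multipliers_def scaleR_add_left sum.distrib distrib_right)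

lemma farkas_multipliers_scale:
  assumes "farkas_multipliers k \<phi> b \<psi> c \<mu>" "0 \<le> u"
  shows "farkas_multipliers k \<phi> b (u *\<^sub>R \<psi>) (u * c) (\<lambda>i. u * \<mu> i)"
proof -
  have "(\<Sum>i<k. u * \<mu> i * b i) = u * (\<Sum>i<k. \<mu> i * b i)"
    by (simp add: sum_distrib_left mult.assoc)
  then show ?thesis
    using assms by (auto simp: farkas_multipliers_def scaleR_sum_right mult_left_mono)
qed

lemma convex_farkas_multipliers_rhs: "convex {(\<psi>, c). \<exists>\<mu>. farkas_multipliers k \<phi> b \<psi> c \<mu>}"
  unfolding convex_def
  by (fastforce intro: farkas_multipliers_add farkas_multipliers_scale)

lemma conic_farkas_multipliers_rhs: "conic {(\<psi>, c). \<exists>\<mu>. farkas_multipliers k \<phi> b \<psi> c \<mu>}"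
  unfolding conic_def by (fastforce intro: farkas_multipliers_scale)

lemma separating_hyperplane_closed_conic:
  fixes C :: "'a::euclidean_space set"
  assumes "convex C" "closed C" "conic C" "C \<noteq> {}" "z \<notin> C"
  obtains a where "a \<bullet> z < 0" "\<And>x. x \<in> C \<Longrightarrow> 0 \<le> a \<bullet> x"
proof -
  obtain a \<beta> where a: "a \<bullet> z < \<beta>" "\<And>x. x \<in> C \<Longrightarrow> \<beta> < a \<bullet> x"
    using separating_hyperplane_closed_point[OF assms(1,2,5)] by blast
  have "\<beta> < 0" using a(2)[of 0] assms(3,4) conic_contains_0 by auto
  have "0 \<le> a \<bullet> x" if "x \<in> C" for x
  proof (rule ccontr)
    assume "\<not> 0 \<le> a \<bullet> x"
    \<comment> \<open>rescaling \<open>x\<close> inside the cone would reach the level \<open>\<beta>\<close>\<close>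
    then have "(\<beta> / (a \<bullet> x)) *\<^sub>R x \<in> C" "a \<bullet> ((\<beta> / (a \<bullet> x)) *\<^sub>R x) = \<beta>"
      using \<open>\<beta> < 0\<close> assms(3) that by (auto simp: conic_def divide_nonpos_neg)
    then show False using a(2) by fastforce
  qed
  moreover have "a \<bullet> z < 0" using a(1) \<open>\<beta> < 0\<close> by simp
  ultimately show ?thesis using that by blast
qed

lemma violated_inequality_from_separator:
  fixes k :: nat
  assumes feasible: "\<forall>i<k. - b i \<le> \<phi> i \<bullet> l0"
    and "0 \<le> s" "\<forall>i<k. 0 \<le> y \<bullet> \<phi> i + s * b i" "y \<bullet> \<psi> + s * c < 0"
  obtains l where "\<forall>i<k. - b i \<le> \<phi> i \<bullet> l" "\<psi> \<bullet> l < - c"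
proof (cases "s = 0")
  case False
  show ?thesis
  proof (rule that[of "(1 / s) *\<^sub>R y"])
    show "\<forall>i<k. - b i \<le> \<phi> i \<bullet> (1 / s) *\<^sub>R y"
      using assms(2,3) False by (auto simp: field_simps inner_commute)
    show "\<psi> \<bullet> (1 / s) *\<^sub>R y < - c"
      using assms(2,4) False by (auto simp: field_simps inner_commute)
  qed
next
  case True
  \<comment> \<open>\<open>y\<close> is a recession direction of the system along which \<open>\<psi>\<close> decreases\<close>
  define t where "t = \<bar>\<psi> \<bullet> l0 + c\<bar> / - (y \<bullet> \<psi>) + 1"
  have "y \<bullet> \<psi> < 0" "0 < t" using assms(4) True by (auto simp: t_def)
  show ?thesis
  proof (rule that[of "l0 + t *\<^sub>R y"])
    show "\<forall>i<k. - b i \<le> \<phi> i \<bullet> (l0 + t *\<^sub>R y)"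
      using feasible assms(3) True \<open>0 < t\<close>
      by (auto simp: inner_add_right inner_commute intro: add_increasing2)
    have "t * (y \<bullet> \<psi>) = - \<bar>\<psi> \<bullet> l0 + c\<bar> + y \<bullet> \<psi>"
      using \<open>y \<bullet> \<psi> < 0\<close> by (simp add: t_def field_simps)
    then show "\<psi> \<bullet> (l0 + t *\<^sub>R y) < - c"
      using \<open>y \<bullet> \<psi> < 0\<close> abs_ge_self[of "\<psi> \<bullet> l0 + c"]
      by (simp add: inner_add_right inner_commute)
  qed
qed

lemma farkas_affine:
  fixes \<phi> :: "nat \<Rightarrow> 'a::euclidean_space"
  assumes feasible: "\<forall>i<k. - b i \<le> \<phi> i \<bullet> l0"
    and implied: "\<forall>l. (\<forall>i<k. - b i \<le> \<phi> i \<bullet> l) \<longrightarrow> - c \<le> \<psi> \<bullet> l"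
  obtains \<mu> where "farkas_multipliers k \<phi> b \<psi> c \<mu>"
proof -
  define K where "K = {(\<psi>, c). \<exists>\<mu>. farkas_multipliers k \<phi> b \<psi> c \<mu>}"
  define G where "G = insert (0, 1) ((\<lambda>i. (\<phi> i, b i)) ` {..<k})"
  define C where "C = conic hull (convex hull G)"
  have "G \<subseteq> K"
  proof -
    have "farkas_multipliers k \<phi> b 0 1 (\<lambda>_. 0)"
      by (simp add: farkas_multipliers_def)
    moreover have "farkas_multipliers k \<phi> b (\<phi> i) (b i) (\<lambda>j. if j = i then 1 else 0)" if "i < k" for i
      using that by (simp add: farkas_multipliers_def if_distrib[of "\<lambda>x. x *\<^sub>R _"]
          if_distrib[of "\<lambda>x. x * _"] cong: if_cong)
    ultimately show ?thesis by (auto simp: G_def K_def)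
  qed
  then have "C \<subseteq> K"
    unfolding C_def K_def
    by (intro hull_minimal conic_farkas_multipliers_rhs convex_farkas_multipliers_rhs)
  have "polytope (convex hull G)"
    unfolding polytope_def by (rule exI[of _ G]) (simp add: G_def)
  then have "closed C"
    unfolding C_def using polyhedron_conic_hull_polytope polyhedron_imp_closed by blast
  have "G \<subseteq> C"
    unfolding C_def using hull_subset[of G convex] hull_subset[of "convex hull G" conic] by blast
  show ?thesis
  proof (rule ccontr)
    assume "\<not> thesis"
    then have "(\<psi>, c) \<notin> C" using that \<open>C \<subseteq> K\<close> by (auto simp: K_def)
    moreover have "convex C" "conic C"
      by (simp_all add: C_def convex_conic_hull conic_conic_hull)
    moreover have "C \<noteq> {}" using \<open>G \<subseteq> C\<close> by (auto simp: G_def)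
    ultimately obtain a where a: "a \<bullet> (\<psi>, c) < 0" "\<And>x. x \<in> C \<Longrightarrow> 0 \<le> a \<bullet> x"
      using separating_hyperplane_closed_conic \<open>closed C\<close> by blast
    obtain y s where "a = (y, s)" by fastforce
    have "0 \<le> s" using a(2)[of "(0, 1)"] \<open>G \<subseteq> C\<close> \<open>a = (y, s)\<close> by (simp add: G_def)
    moreover have "\<forall>i<k. 0 \<le> y \<bullet> \<phi> i + s * b i"
      using a(2) \<open>G \<subseteq> C\<close> \<open>a = (y, s)\<close> by (auto simp: G_def)
    moreover have "y \<bullet> \<psi> + s * c < 0" using a(1) \<open>a = (y, s)\<close> by simp
    ultimately obtain l where "\<forall>i<k. - b i \<le> \<phi> i \<bullet> l" "\<psi> \<bullet> l < - c"
      using violated_inequality_from_separator[OF feasible] by metis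
    then show False using implied by fastforce
  qed
qed

section \<open>Rational Farkas multipliers\<close>

lemma dependence_with_nonpositive_rhs:
  fixes k :: nat
  assumes feasible: "\<forall>i<k. - b i \<le> \<phi> i \<bullet> l0"
    and dep: "(\<Sum>i<k. \<delta> i *\<^sub>R \<phi> i) = 0" and "\<exists>i<k. \<delta> i \<noteq> 0"
  obtains d where "d = \<delta> \<or> d = (\<lambda>i. - \<delta> i)" "(\<Sum>i<k. d i * b i) \<le> 0" "\<exists>i<k. d i < 0"
proof -
  have rhs_nonneg: "0 \<le> (\<Sum>i<k. e i * b i)"
    if "\<forall>i<k. 0 \<le> e i" "(\<Sum>i<k. e i *\<^sub>R \<phi> i) = 0" for e
  proof -
    have "farkas_multipliers k \<phi> b 0 (\<Sum>i<k. e i * b i) e"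
      using that by (simp add: farkas_multipliers_def)
    from farkas_multipliers_imp_inequality[OF this feasible] show ?thesis by simp
  qed
  have neg_rhs: "(\<Sum>i<k. - \<delta> i * b i) = - (\<Sum>i<k. \<delta> i * b i)"
    by (simp add: sum_negf)
  have neg_dep: "(\<Sum>i<k. (- \<delta> i) *\<^sub>R \<phi> i) = 0"
    using dep by (simp add: sum_negf)
  consider "\<forall>i<k. 0 \<le> \<delta> i" | "\<forall>i<k. \<delta> i \<le> 0" | "\<exists>i<k. \<delta> i < 0" "\<exists>i<k. 0 < \<delta> i"
    by force
  then show ?thesis
  proof cases
    case 1
    then have "\<exists>i<k. - \<delta> i < 0" using assms(3) by force
    then show ?thesis
      using that[of "\<lambda>i. - \<delta> i"] rhs_nonneg[OF 1 dep] neg_rhs by simp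
  next
    case 2
    then have "\<exists>i<k. \<delta> i < 0" using assms(3) by force
    then show ?thesis
      using that[of \<delta>] rhs_nonneg[of "\<lambda>i. - \<delta> i"] 2 neg_dep neg_rhs by simp
  next
    case 3
    then show ?thesis
      using that[of \<delta>] that[of "\<lambda>i. - \<delta> i"] neg_rhs
      by (cases "(\<Sum>i<k. \<delta> i * b i) \<le> 0") auto
  qed
qed

lemma farkas_multipliers_shrink_support:
  assumes \<mu>: "farkas_multipliers k \<phi> b \<psi> c \<mu>"
    and d: "\<forall>i<k. \<mu> i = 0 \<longrightarrow> d i = 0" "(\<Sum>i<k. d i *\<^sub>R \<phi> i) = 0" "(\<Sum>i<k. d i * b i) \<le> 0"
    and "\<exists>i<k. d i < 0"
  obtains \<mu>' where "farkas_multipliers k \<phi> b \<psi> c \<mu>'"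
    "{i. i < k \<and> \<mu>' i \<noteq> 0} \<subset> {i. i < k \<and> \<mu> i \<noteq> 0}"
proof -
  define I where "I = {i. i < k \<and> d i < 0}"
  define r where "r i = \<mu> i / - d i" for i
  define i0 where "i0 = arg_min_on r I"
  have "finite I" "I \<noteq> {}" using assms(5) by (auto simp: I_def)
  then have "i0 \<in> I" and r_min: "\<And>i. i \<in> I \<Longrightarrow> r i0 \<le> r i"
    unfolding i0_def by (auto intro: arg_min_if_finite(1) arg_min_least)
  then have i0: "i0 < k" "d i0 < 0" by (simp_all add: I_def)
  \<comment> \<open>move along \<open>d\<close> until the first coordinate of \<open>\<mu>\<close> vanishes\<close>
  define t where "t = r i0"
  define \<mu>' where "\<mu>' i = \<mu> i + t * d i" for i
  have "0 \<le> t" using \<mu> i0 by (simp add: t_def r_def farkas_multipliers_def divide_nonneg_neg)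
  have "0 \<le> \<mu>' i" if "i < k" for i
  proof (cases "d i < 0")
    case True
    then have "t \<le> \<mu> i / - d i" using r_min[of i] that by (simp add: I_def t_def r_def)
    then have "t * - d i \<le> \<mu> i" using True by (simp only: pos_le_divide_eq neg_0_less_iff_less)
    then show ?thesis by (simp add: \<mu>'_def)
  next
    case False
    then show ?thesis using \<mu> \<open>0 \<le> t\<close> that by (simp add: \<mu>'_def farkas_multipliers_def)
  qed
  moreover have "(\<Sum>i<k. \<mu>' i *\<^sub>R \<phi> i) = (\<Sum>i<k. \<mu> i *\<^sub>R \<phi> i) + t *\<^sub>R (\<Sum>i<k. d i *\<^sub>R \<phi> i)"
    by (simp add: \<mu>'_def scaleR_add_left sum.distrib scaleR_sum_right)
  moreover have "(\<Sum>i<k. \<mu>' i * b i) = (\<Sum>i<k. \<mu> i * b i) + t * (\<Sum>i<k. d i * b i)"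
    by (simp add: \<mu>'_def distrib_right sum.distrib sum_distrib_left mult.assoc)
  moreover have "t * (\<Sum>i<k. d i * b i) \<le> 0"
    using \<open>0 \<le> t\<close> d(3) by (rule mult_nonneg_nonpos)
  ultimately have "farkas_multipliers k \<phi> b \<psi> c \<mu>'"
    using \<mu> d(2) by (auto simp: farkas_multipliers_def)
  moreover have "\<mu>' i0 = 0" "\<mu> i0 \<noteq> 0"
    using i0 d(1) by (auto simp: \<mu>'_def t_def r_def)
  then have "{i. i < k \<and> \<mu>' i \<noteq> 0} \<subset> {i. i < k \<and> \<mu> i \<noteq> 0}"
    using d(1) i0 by (auto simp: \<mu>'_def)
  ultimately show ?thesis using that by blast
qed

lemma farkas_multipliers_independent_support:
  assumes feasible: "\<forall>i<k. - b i \<le> \<phi> i \<bullet> l0" and "farkas_multipliers k \<phi> b \<psi> c \<mu>0"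
  obtains \<mu> where "farkas_multipliers k \<phi> b \<psi> c \<mu>"
    "\<And>\<delta>. \<forall>i<k. \<mu> i = 0 \<longrightarrow> \<delta> i = 0 \<Longrightarrow> (\<Sum>i<k. \<delta> i *\<^sub>R \<phi> i) = 0 \<Longrightarrow> \<forall>i<k. \<delta> i = 0"
proof -
  define supp where "supp \<mu> = {i. i < k \<and> \<mu> i \<noteq> 0}" for \<mu> :: "nat \<Rightarrow> real"
  obtain \<mu> where \<mu>: "farkas_multipliers k \<phi> b \<psi> c \<mu>"
    and minimal: "\<And>\<mu>'. farkas_multipliers k \<phi> b \<psi> c \<mu>' \<Longrightarrow> card (supp \<mu>) \<le> card (supp \<mu>')"
    using ex_has_least_nat[of "farkas_multipliers k \<phi> b \<psi> c" \<mu>0 "\<lambda>\<mu>. card (supp \<mu>)"] assms(2)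
    by blast
  have "\<forall>i<k. \<delta> i = 0"
    if supp_\<delta>: "\<forall>i<k. \<mu> i = 0 \<longrightarrow> \<delta> i = 0" and dep: "(\<Sum>i<k. \<delta> i *\<^sub>R \<phi> i) = 0"
    for \<delta>
  proof (rule ccontr)
    assume "\<not> (\<forall>i<k. \<delta> i = 0)"
    then have "\<exists>i<k. \<delta> i \<noteq> 0" by blast
    then obtain d where d: "d = \<delta> \<or> d = (\<lambda>i. - \<delta> i)" "(\<Sum>i<k. d i * b i) \<le> 0" "\<exists>i<k. d i < 0"
      by (rule dependence_with_nonpositive_rhs[OF feasible dep])
    have "\<forall>i<k. \<mu> i = 0 \<longrightarrow> d i = 0" "(\<Sum>i<k. d i *\<^sub>R \<phi> i) = 0"
      using d(1) supp_\<delta> dep by (auto simp: sum_negf)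
    then obtain \<mu>' where "farkas_multipliers k \<phi> b \<psi> c \<mu>'" "supp \<mu>' \<subset> supp \<mu>"
      using farkas_multipliers_shrink_support[OF \<mu> _ _ d(2,3)] unfolding supp_def by blast
    moreover have "finite (supp \<mu>)" by (simp add: supp_def)
    ultimately show False
      using minimal psubset_card_mono[of "supp \<mu>" "supp \<mu>'"] by fastforce
  qed
  then show ?thesis using that \<mu> by blast
qed

text \<open>The coefficient \<open>\<mu> i\<close> is read off by pairing with the rational component of \<open>\<phi> i\<close>
  orthogonal to the other \<open>\<phi> j\<close>.\<close>

lemma rational_coefficient_of_independent:
  fixes \<phi> :: "'i \<Rightarrow> real^'n"
  assumes "finite S" "\<And>j. j \<in> S \<Longrightarrow> rational_vec (\<phi> j)" "rational_vec (\<Sum>j\<in>S. \<mu> j *\<^sub>R \<phi> j)"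
    and indep: "\<And>\<delta>. (\<Sum>j\<in>S. \<delta> j *\<^sub>R \<phi> j) = 0 \<Longrightarrow> \<forall>j\<in>S. \<delta> j = 0"
    and "i \<in> S"
  shows "\<mu> i \<in> \<rat>"
proof -
  let ?B = "\<phi> ` (S - {i})"
  have "finite ?B" using assms(1) by simp
  moreover have "rational_vec b" if "b \<in> ?B" for b using assms(2) that by blast
  ultimately obtain p where p: "\<And>x. rational_vec x \<Longrightarrow> rational_vec (p x)"
    "\<And>x b. b \<in> ?B \<Longrightarrow> p x \<bullet> b = 0" "\<And>x. x - p x \<in> span ?B"
    by (metis rational_orthogonal_projection)
  define y where "y = p (\<phi> i)"
  have "rational_vec y" unfolding y_def using assms(2,5) by (intro p(1))
  have y_orth: "y \<bullet> \<phi> j = 0" if "j \<in> S - {i}" for j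
    unfolding y_def using that by (intro p(2)) simp
  have "\<phi> i - y \<in> span ?B" unfolding y_def by (rule p(3))
  then have "y \<bullet> (\<phi> i - y) = 0" by (rule inner_span_eq_0) (use y_orth in blast)
  then have "\<phi> i \<bullet> y = y \<bullet> y" by (simp add: inner_diff_right inner_commute)
  have "y \<noteq> 0"
  proof
    assume "y = 0"
    then have "\<phi> i \<in> span ?B" using \<open>\<phi> i - y \<in> span ?B\<close> by simp
    then obtain c where c: "\<phi> i = (\<Sum>j\<in>S - {i}. c j *\<^sub>R \<phi> j)"
      using span_image_eq_sum assms(1) by blast
    have "(\<Sum>j\<in>S - {i}. (c(i := -1)) j *\<^sub>R \<phi> j) = (\<Sum>j\<in>S - {i}. c j *\<^sub>R \<phi> j)"
      by (intro sum.cong) auto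
    then have "(\<Sum>j\<in>S. (c(i := -1)) j *\<^sub>R \<phi> j) = - \<phi> i + (\<Sum>j\<in>S - {i}. c j *\<^sub>R \<phi> j)"
      using assms(1,5) by (simp add: sum.remove)
    then have "(\<Sum>j\<in>S. (c(i := -1)) j *\<^sub>R \<phi> j) = 0" using c by simp
    then show False using indep assms(5) by fastforce
  qed
  have "(\<Sum>j\<in>S. \<mu> j *\<^sub>R \<phi> j) \<bullet> y = (\<Sum>j\<in>S. \<mu> j * (\<phi> j \<bullet> y))"
    by (simp add: inner_sum_left)
  also have "\<dots> = \<mu> i * (\<phi> i \<bullet> y) + (\<Sum>j\<in>S - {i}. \<mu> j * (\<phi> j \<bullet> y))"
    using assms(1,5) by (simp add: sum.remove)
  also have "\<dots> = \<mu> i * (y \<bullet> y)"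
    using y_orth \<open>\<phi> i \<bullet> y = y \<bullet> y\<close> by (simp add: inner_commute)
  finally have "\<mu> i = (\<Sum>j\<in>S. \<mu> j *\<^sub>R \<phi> j) \<bullet> y / (y \<bullet> y)"
    using \<open>y \<noteq> 0\<close> by simp
  then show ?thesis
    using assms(3) \<open>rational_vec y\<close> by (simp add: inner_rational_vec)
qed

lemma farkas_affine_rational:
  fixes \<phi> :: "nat \<Rightarrow> real^'n"
  assumes "\<forall>i<k. rational_vec (\<phi> i)" "rational_vec \<psi>"
    and feasible: "\<forall>i<k. - b i \<le> \<phi> i \<bullet> l0"
    and implied: "\<forall>l. (\<forall>i<k. - b i \<le> \<phi> i \<bullet> l) \<longrightarrow> - c \<le> \<psi> \<bullet> l"
  obtains \<mu> where "farkas_multipliers k \<phi> b \<psi> c \<mu>" "\<forall>i<k. \<mu> i \<in> \<rat>"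
proof -
  obtain \<mu>0 where "farkas_multipliers k \<phi> b \<psi> c \<mu>0"
    using farkas_affine[OF feasible implied] by blast
  then obtain \<mu> where \<mu>: "farkas_multipliers k \<phi> b \<psi> c \<mu>"
    and indep: "\<And>\<delta>. \<forall>i<k. \<mu> i = 0 \<longrightarrow> \<delta> i = 0 \<Longrightarrow> (\<Sum>i<k. \<delta> i *\<^sub>R \<phi> i) = 0 \<Longrightarrow> \<forall>i<k. \<delta> i = 0"
    using farkas_multipliers_independent_support[OF feasible] by blast
  define S where "S = {i. i < k \<and> \<mu> i \<noteq> 0}"
  have "finite S" by (simp add: S_def)
  have "(\<Sum>i\<in>S. \<mu> i *\<^sub>R \<phi> i) = \<psi>"
  proof -
    have "(\<Sum>i\<in>S. \<mu> i *\<^sub>R \<phi> i) = (\<Sum>i<k. \<mu> i *\<^sub>R \<phi> i)"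
      by (rule sum.mono_neutral_left) (auto simp: S_def)
    then show ?thesis using \<mu> by (simp add: farkas_multipliers_def)
  qed
  have "\<mu> i \<in> \<rat>" if "i < k" for i
  proof (cases "i \<in> S")
    case True
    show ?thesis
    proof (rule rational_coefficient_of_independent[OF \<open>finite S\<close> _ _ _ True])
      show "rational_vec (\<phi> j)" if "j \<in> S" for j using assms(1) that by (simp add: S_def)
      show "rational_vec (\<Sum>j\<in>S. \<mu> j *\<^sub>R \<phi> j)" using assms(2) \<open>(\<Sum>i\<in>S. \<mu> i *\<^sub>R \<phi> i) = \<psi>\<close> by simp
      show "\<forall>j\<in>S. \<delta> j = 0" if "(\<Sum>j\<in>S. \<delta> j *\<^sub>R \<phi> j) = 0" for \<delta>
      proof -
        define \<delta>' where "\<delta>' j = (if j \<in> S then \<delta> j else 0)" for j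
        have "(\<Sum>j<k. \<delta>' j *\<^sub>R \<phi> j) = (\<Sum>j\<in>S. \<delta>' j *\<^sub>R \<phi> j)"
          by (rule sum.mono_neutral_right) (auto simp: S_def \<delta>'_def)
        also have "\<dots> = 0" using that by (simp add: \<delta>'_def)
        finally have "\<forall>j<k. \<delta>' j = 0" by (intro indep) (auto simp: S_def \<delta>'_def)
        then show ?thesis by (auto simp: S_def \<delta>'_def)
      qed
    qed
  next
    case False
    then show ?thesis using that by (simp add: S_def)
  qed
  then show ?thesis using that \<mu> by blast
qed

section \<open>Inclusions of polyhedra\<close>

lemma polyP_subset_if_farkas_multipliers:
  assumes "\<forall>j<k2. farkas_multipliers k1 ph1 (\<lambda>i. ch1 i \<bullet> w) (ph2 j) (ch2 j \<bullet> w) (M j)"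
  shows "polyP k1 ph1 ch1 w \<subseteq> polyP k2 ph2 ch2 w"
  using assms farkas_multipliers_imp_inequality by (fastforce simp: polyP_def)

lemma rational_farkas_multipliers_if_polyP_subset:
  fixes ph1 ph2 :: "nat \<Rightarrow> real^'a"
  assumes "\<forall>i<k1. rational_vec (ph1 i)" "\<forall>j<k2. rational_vec (ph2 j)"
    and "polyP k1 ph1 ch1 v \<subseteq> polyP k2 ph2 ch2 v" "polyP k1 ph1 ch1 v \<noteq> {}"
  obtains M where "\<forall>j<k2. farkas_multipliers k1 ph1 (\<lambda>i. ch1 i \<bullet> v) (ph2 j) (ch2 j \<bullet> v) (M j)"
    "\<forall>j<k2. \<forall>i<k1. M j i \<in> \<rat>"
proof -
  obtain l0 where l0: "\<forall>i<k1. - (ch1 i \<bullet> v) \<le> ph1 i \<bullet> l0"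
    using assms(4) by (auto simp: polyP_def)
  have "\<exists>\<mu>. farkas_multipliers k1 ph1 (\<lambda>i. ch1 i \<bullet> v) (ph2 j) (ch2 j \<bullet> v) \<mu> \<and> (\<forall>i<k1. \<mu> i \<in> \<rat>)"
    if "j < k2" for j
  proof -
    have "\<forall>l. (\<forall>i<k1. - (ch1 i \<bullet> v) \<le> ph1 i \<bullet> l) \<longrightarrow> - (ch2 j \<bullet> v) \<le> ph2 j \<bullet> l"
      using assms(3) that by (auto simp: polyP_def subset_iff)
    from farkas_affine_rational[OF assms(1) assms(2)[rule_format, OF that] l0 this]
    show ?thesis by blast
  qed
  then show ?thesis using that by metis
qed

lemma farkas_multipliers_linear_rhs:
  "farkas_multipliers k \<phi> (\<lambda>i. ch i \<bullet> w) \<psi> (chp \<bullet> w) \<mu> \<longleftrightarrow>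
     (\<forall>i<k. 0 \<le> \<mu> i) \<and> (\<Sum>i<k. \<mu> i *\<^sub>R \<phi> i) = \<psi> \<and> 0 \<le> (chp - (\<Sum>i<k. \<mu> i *\<^sub>R ch i)) \<bullet> w"
  by (auto simp: farkas_multipliers_def inner_diff_left inner_sum_left)

lemma polyP_subset_on_rational_cone:
  fixes ph1 ph2 :: "nat \<Rightarrow> real^'a" and ch1 ch2 :: "nat \<Rightarrow> real^'v"
  assumes "\<forall>i<k1. rational_vec (ph1 i) \<and> rational_vec (ch1 i)"
    and "\<forall>j<k2. rational_vec (ph2 j) \<and> rational_vec (ch2 j)"
    and "polyP k1 ph1 ch1 v \<subseteq> polyP k2 ph2 ch2 v" "polyP k1 ph1 ch1 v \<noteq> {}"
  obtains D where "finite D" "\<forall>d\<in>D. rational_vec d" "v \<in> dual_cone D"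
    "\<And>w. w \<in> dual_cone D \<Longrightarrow> polyP k1 ph1 ch1 w \<subseteq> polyP k2 ph2 ch2 w"
proof -
  obtain M where M: "\<forall>j<k2. farkas_multipliers k1 ph1 (\<lambda>i. ch1 i \<bullet> v) (ph2 j) (ch2 j \<bullet> v) (M j)"
    and M_rat: "\<forall>j<k2. \<forall>i<k1. M j i \<in> \<rat>"
    using rational_farkas_multipliers_if_polyP_subset assms by blast
  define slack where "slack j = ch2 j - (\<Sum>i<k1. M j i *\<^sub>R ch1 i)" for j
  show ?thesis
  proof (rule that[of "slack ` {..<k2}"])
    show "finite (slack ` {..<k2})" by simp
    show "\<forall>d\<in>slack ` {..<k2}. rational_vec d"
      using assms(1,2) M_rat
      by (auto simp: slack_def intro!: rational_vec_diff rational_vec_sum rational_vec_scaleR)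
    show "v \<in> dual_cone (slack ` {..<k2})"
      using M by (auto simp: dual_cone_def slack_def farkas_multipliers_linear_rhs)
    show "polyP k1 ph1 ch1 w \<subseteq> polyP k2 ph2 ch2 w" if "w \<in> dual_cone (slack ` {..<k2})" for w
      using that M unfolding dual_cone_def
      by (intro polyP_subset_if_farkas_multipliers[where M = M]) (auto simp: slack_def farkas_multipliers_linear_rhs)
  qed
qed

theorem lemma8p7:
  fixes k1 k2 :: nat
    and ph1 ph2 :: "nat \<Rightarrow> real^'a"
    and ch1 ch2 :: "nat \<Rightarrow> real^'v"
    and v :: "real^'v"
  assumes "\<forall>i<k1. rational_vec (ph1 i) \<and> rational_vec (ch1 i)"
    and "\<forall>j<k2. rational_vec (ph2 j) \<and> rational_vec (ch2 j)"
    and "polyP k1 ph1 ch1 v = polyP k2 ph2 ch2 v"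
    and "aff_dim (polyP k1 ph1 ch1 v) = int CARD('a)"
  shows "\<forall>U. open U \<and> v \<in> U \<longrightarrow>
           (\<exists>v'\<in>U. rational_vec v' \<and> polyP k1 ph1 ch1 v' = polyP k2 ph2 ch2 v')"
proof (intro allI impI)
  fix U assume U: "open U \<and> v \<in> U"
  \<comment> \<open>full dimension is only used to know that the polyhedron is nonempty\<close>
  have ne: "polyP k1 ph1 ch1 v \<noteq> {}"
  proof
    assume "polyP k1 ph1 ch1 v = {}"
    then show False using assms(4) by simp
  qed
  obtain D1 where D1: "finite D1" "\<forall>d\<in>D1. rational_vec d" "v \<in> dual_cone D1"
    "\<And>w. w \<in> dual_cone D1 \<Longrightarrow> polyP k1 ph1 ch1 w \<subseteq> polyP k2 ph2 ch2 w"
    using polyP_subset_on_rational_cone[OF assms(1,2) equalityD1[OF assms(3)] ne] by blast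
  obtain D2 where D2: "finite D2" "\<forall>d\<in>D2. rational_vec d" "v \<in> dual_cone D2"
    "\<And>w. w \<in> dual_cone D2 \<Longrightarrow> polyP k2 ph2 ch2 w \<subseteq> polyP k1 ph1 ch1 w"
    using polyP_subset_on_rational_cone[OF assms(2,1) equalityD2[OF assms(3)] ne[unfolded assms(3)]]
    by blast
  obtain w where w: "w \<in> U \<inter> dual_cone (D1 \<union> D2)" "rational_vec w"
    by (rule open_contains_rational_vec_dual_cone[of "D1 \<union> D2" v U]) (use D1 D2 U in \<open>auto simp: dual_cone_Un\<close>)
  then have "polyP k1 ph1 ch1 w = polyP k2 ph2 ch2 w"
    using D1(4) D2(4) by (auto simp: dual_cone_Un)
  then show "\<exists>v'\<in>U. rational_vec v' \<and> polyP k1 ph1 ch1 v' = polyP k2 ph2 ch2 v'"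
    using w by blast
qed

end
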